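(* Let $(X,m)$ be a $\sigma$-finite measure space, $1\le p<\infty$, and $\{T_t:t>0\}$ a one-parameter family of operators on $L^p(X,m)$ with $(x,t)\mapsto T_tf(x)$ measurable. Let $f\in L^p(X,m)$ satisfy: there is $C_f>0$ (independent of $t$) with $\|T_tf-f\|_{L^\infty(X,m)}\le C_f\,t^{1/p}$ for all $t>0$. Then $$\|f\|_{L^p(X,m)}^p=\lim_{\lambda\to\infty}\lambda^p\,(m\times\mathcal L)\Big(\Big\{(x,t)\in X\times(0,\infty):\frac{|T_tf(x)|}{t^{1/p}}>\lambda\Big\}\Big).$$
   Context: $\mathcal L$ denotes Lebesgue measure on $(0,\infty)$. *)

theory Defs
  imports "HOL-Analysis.Analysis"
begin

end

theory Submission
  imports Defs "HOL-Real_Asymp.Real_Asymp"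
begin

text \<open>By Tonelli, the set \<open>{(x, t). t > 0, \<bar>f x\<bar> / t powr (1/p) > \<lambda>}\<close> has measure
  \<open>\<integral> (\<bar>f x\<bar> / \<lambda>) powr p dm = \<parallel>f\<parallel>\<^sub>p\<^sup>p / \<lambda> powr p\<close>, because its section at \<open>x\<close> is the interval
  \<open>(0, (\<bar>f x\<bar> / \<lambda>) powr p)\<close>. The hypothesis gives \<open>\<bar>T\<^sub>t f - f\<bar> \<le> C t powr (1/p)\<close> almost everywhere
  on \<open>X \<times> (0, \<infinity>)\<close>, so up to null sets the corresponding set for \<open>T\<^sub>t f\<close> lies between the sets
  for \<open>f\<close> at the levels \<open>\<lambda> + C\<close> and \<open>\<lambda> - C\<close>; after scaling by \<open>\<lambda> powr p\<close> both bounds tend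
  to \<open>\<parallel>f\<parallel>\<^sub>p\<^sup>p\<close>.\<close>

lemma less_divide_powr_inverse_iff:
  fixes p l a t :: real
  assumes "p > 0" "l > 0" "a \<ge> 0" "t > 0"
  shows "l < a / t powr (1 / p) \<longleftrightarrow> t < (a / l) powr p"
proof -
  have "l < a / t powr (1 / p) \<longleftrightarrow> t powr (1 / p) < a / l"
    using assms by (simp add: field_simps)
  also have "\<dots> \<longleftrightarrow> (t powr (1 / p)) powr p < (a / l) powr p"
    using assms powr_mono2[of p "a / l" "t powr (1 / p)"]
    by (metis powr_less_mono2 divide_nonneg_pos less_imp_le not_le powr_ge_zero)
  also have "(t powr (1 / p)) powr p = t"
    using assms by (simp add: powr_powr)
  finally show ?thesis .
qed

lemma emeasure_pair_lborel_ratio_superlevel: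
  fixes f :: "'a \<Rightarrow> real"
  assumes [measurable]: "f \<in> borel_measurable M" and "p > 0" "l > 0"
  shows "ennreal (l powr p) * emeasure (M \<Otimes>\<^sub>M lborel)
           {z \<in> space (M \<Otimes>\<^sub>M lborel). snd z > 0 \<and> \<bar>f (fst z)\<bar> / snd z powr (1 / p) > l}
         = (\<integral>\<^sup>+ x. ennreal (\<bar>f x\<bar> powr p) \<partial>M)"
    (is "_ * emeasure _ ?A = _")
proof -
  have "?A \<in> sets (M \<Otimes>\<^sub>M lborel)" by measurable
  then have "emeasure (M \<Otimes>\<^sub>M lborel) ?A = (\<integral>\<^sup>+ x. emeasure lborel (Pair x -` ?A) \<partial>M)"
    by (rule lborel.emeasure_pair_measure_alt)
  also have "\<dots> = (\<integral>\<^sup>+ x. ennreal (\<bar>f x\<bar> powr p / l powr p) \<partial>M)"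
  proof (rule nn_integral_cong)
    fix x assume "x \<in> space M"
    then have "Pair x -` ?A = {0<..<(\<bar>f x\<bar> / l) powr p}"
      using assms less_divide_powr_inverse_iff[of p l "\<bar>f x\<bar>"]
      by (auto simp: space_pair_measure)
    then show "emeasure lborel (Pair x -` ?A) = ennreal (\<bar>f x\<bar> powr p / l powr p)"
      using assms by (simp add: powr_divide)
  qed
  finally have "ennreal (l powr p) * emeasure (M \<Otimes>\<^sub>M lborel) ?A
      = (\<integral>\<^sup>+ x. ennreal (l powr p) * ennreal (\<bar>f x\<bar> powr p / l powr p) \<partial>M)"
    by (simp add: nn_integral_cmult)
  also have "\<dots> = (\<integral>\<^sup>+ x. ennreal (\<bar>f x\<bar> powr p) \<partial>M)"
    using assms by (simp add: ennreal_mult[symmetric])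
  finally show ?thesis .
qed

lemma (in pair_sigma_finite) AE_pair_measure_of_AE_fibres:
  assumes "{z \<in> space (M1 \<Otimes>\<^sub>M M2). P (fst z) (snd z)} \<in> sets (M1 \<Otimes>\<^sub>M M2)"
    and "\<And>y. AE x in M1. P x y"
  shows "AE z in M1 \<Otimes>\<^sub>M M2. P (fst z) (snd z)"
proof -
  have "AE y in M2. AE x in M1. P x y"
    using assms(2) by simp
  then show ?thesis
    using AE_commute[OF assms(1)] AE_pair_iff[OF assms(1)] by simp
qed

lemma emeasure_ratio_superlevel_mono_AE:
  fixes u v s :: "'a \<Rightarrow> real"
  assumes "{z \<in> space N. D z \<and> \<bar>u z\<bar> / s z > l} \<in> sets N"
    and "\<And>z. z \<in> space N \<Longrightarrow> D z \<Longrightarrow> s z > 0"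
    and "AE z in N. D z \<longrightarrow> \<bar>u z - v z\<bar> \<le> c * s z"
  shows "emeasure N {z \<in> space N. D z \<and> \<bar>v z\<bar> / s z > l + c}
         \<le> emeasure N {z \<in> space N. D z \<and> \<bar>u z\<bar> / s z > l}"
proof (rule emeasure_mono_AE[OF _ assms(1)])
  show "AE z in N. z \<in> {z \<in> space N. D z \<and> \<bar>v z\<bar> / s z > l + c}
                \<longrightarrow> z \<in> {z \<in> space N. D z \<and> \<bar>u z\<bar> / s z > l}"
    using assms(3)
  proof eventually_elim
    case (elim z)
    show ?case
    proof
      assume z: "z \<in> {z \<in> space N. D z \<and> \<bar>v z\<bar> / s z > l + c}"
      then have s: "s z > 0" using assms(2) by blast
      then have "\<bar>v z\<bar> > (l + c) * s z" using z by (simp add: pos_less_divide_eq)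
      moreover have "\<bar>u z - v z\<bar> \<le> c * s z" using elim z by blast
      ultimately have "\<bar>u z\<bar> > l * s z" by (simp add: algebra_simps abs_if split: if_splits)
      then show "z \<in> {z \<in> space N. D z \<and> \<bar>u z\<bar> / s z > l}"
        using z s by (simp add: pos_less_divide_eq)
    qed
  qed
qed

lemma tendsto_shifted_ratio_powr_at_top:
  fixes c p :: real
  shows "((\<lambda>l. (l / (l + c)) powr p) \<longlongrightarrow> 1) at_top"
proof -
  have "((\<lambda>l. l / (l + c)) \<longlongrightarrow> 1) at_top" by real_asymp
  then show ?thesis
    using tendsto_powr[of "\<lambda>l. l / (l + c)" 1 at_top "\<lambda>_. p" p] by simp
qed

lemma ennreal_ratio_powr_mult:
  fixes a b p :: real
  assumes "a \<ge> 0" "b > 0"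
  shows "ennreal ((a / b) powr p) * ennreal (b powr p) = ennreal (a powr p)"
  using assms by (simp add: ennreal_mult[symmetric] powr_divide)

lemma tendsto_powr_mult_of_shifted_bounds:
  fixes F G :: "real \<Rightarrow> ennreal" and c p :: real
  assumes "I < top" "c \<ge> 0"
    and level: "\<And>l. l > 0 \<Longrightarrow> ennreal (l powr p) * F l = I"
    and lower: "\<And>l. l > c \<Longrightarrow> F (l + c) \<le> G l"
    and upper: "\<And>l. l > c \<Longrightarrow> G l \<le> F (l - c)"
  shows "((\<lambda>l. ennreal (l powr p) * G l) \<longlongrightarrow> I) at_top"
proof (rule tendsto_sandwich)
  have "((\<lambda>l. ennreal ((l / (l + d)) powr p) * I) \<longlongrightarrow> I) at_top" for d
    using ennreal_tendsto_cmult[OF \<open>I < top\<close> tendsto_ennrealI[OF tendsto_shifted_ratio_powr_at_top]]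
    by (simp add: mult.commute)
  from this[of c] this[of "- c"]
  show "((\<lambda>l. ennreal ((l / (l + c)) powr p) * I) \<longlongrightarrow> I) at_top"
    and "((\<lambda>l. ennreal ((l / (l - c)) powr p) * I) \<longlongrightarrow> I) at_top"
    by simp_all
  show "\<forall>\<^sub>F l in at_top. ennreal ((l / (l + c)) powr p) * I \<le> ennreal (l powr p) * G l"
    using eventually_gt_at_top[of c]
  proof eventually_elim
    case (elim l)
    then have "ennreal ((l / (l + c)) powr p) * I
        = ennreal ((l / (l + c)) powr p) * ennreal ((l + c) powr p) * F (l + c)"
      using \<open>c \<ge> 0\<close> by (simp add: level mult.assoc)
    also have "\<dots> = ennreal (l powr p) * F (l + c)"
      using elim \<open>c \<ge> 0\<close> by (simp add: ennreal_ratio_powr_mult)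
    also have "\<dots> \<le> ennreal (l powr p) * G l"
      using lower[OF elim] by (rule mult_left_mono) simp
    finally show ?case .
  qed
  show "\<forall>\<^sub>F l in at_top. ennreal (l powr p) * G l \<le> ennreal ((l / (l - c)) powr p) * I"
    using eventually_gt_at_top[of c]
  proof eventually_elim
    case (elim l)
    then have "ennreal (l powr p) * G l \<le> ennreal (l powr p) * F (l - c)"
      using upper[OF elim] by (intro mult_left_mono) simp_all
    also have "\<dots> = ennreal ((l / (l - c)) powr p) * ennreal ((l - c) powr p) * F (l - c)"
      using elim \<open>c \<ge> 0\<close> by (simp add: ennreal_ratio_powr_mult)
    also have "\<dots> = ennreal ((l / (l - c)) powr p) * I"
      using elim by (simp add: level mult.assoc)
    finally show ?case .
  qed
qed

lemma tendsto_powr_mult_emeasure_ratio_superlevel: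
  fixes f :: "'a \<Rightarrow> real" and g :: "'a \<times> real \<Rightarrow> real" and p C :: real
  assumes [measurable]: "f \<in> borel_measurable M" "g \<in> borel_measurable (M \<Otimes>\<^sub>M lborel)"
    and "p > 0" "C \<ge> 0" "(\<integral>\<^sup>+ x. ennreal (\<bar>f x\<bar> powr p) \<partial>M) < top"
    and close: "AE z in M \<Otimes>\<^sub>M lborel. snd z > 0 \<longrightarrow> \<bar>g z - f (fst z)\<bar> \<le> C * snd z powr (1 / p)"
  shows "((\<lambda>l. ennreal (l powr p) * emeasure (M \<Otimes>\<^sub>M lborel)
            {z \<in> space (M \<Otimes>\<^sub>M lborel). snd z > 0 \<and> \<bar>g z\<bar> / snd z powr (1 / p) > l})
          \<longlongrightarrow> (\<integral>\<^sup>+ x. ennreal (\<bar>f x\<bar> powr p) \<partial>M)) at_top"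
proof -
  define S where "S \<phi> l = {z \<in> space (M \<Otimes>\<^sub>M lborel). snd z > 0 \<and> \<bar>\<phi> z\<bar> / snd z powr (1 / p) > l}"
    for \<phi> l
  have S_sets: "S \<phi> l \<in> sets (M \<Otimes>\<^sub>M lborel)" if [measurable]: "\<phi> \<in> borel_measurable (M \<Otimes>\<^sub>M lborel)"
    for \<phi> l
    unfolding S_def by measurable
  have f_meas: "(\<lambda>z. f (fst z)) \<in> borel_measurable (M \<Otimes>\<^sub>M lborel)"
    by measurable
  from close have close_sym:
    "AE z in M \<Otimes>\<^sub>M lborel. snd z > 0 \<longrightarrow> \<bar>f (fst z) - g z\<bar> \<le> C * snd z powr (1 / p)"
    by eventually_elim (simp add: abs_minus_commute)
  have "((\<lambda>l. ennreal (l powr p) * emeasure (M \<Otimes>\<^sub>M lborel) (S g l))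
      \<longlongrightarrow> (\<integral>\<^sup>+ x. ennreal (\<bar>f x\<bar> powr p) \<partial>M)) at_top"
  proof (rule tendsto_powr_mult_of_shifted_bounds[where F="\<lambda>l. emeasure (M \<Otimes>\<^sub>M lborel) (S (\<lambda>z. f (fst z)) l)"])
    show "ennreal (l powr p) * emeasure (M \<Otimes>\<^sub>M lborel) (S (\<lambda>z. f (fst z)) l)
        = (\<integral>\<^sup>+ x. ennreal (\<bar>f x\<bar> powr p) \<partial>M)" if "l > 0" for l
      unfolding S_def using \<open>p > 0\<close> that by (intro emeasure_pair_lborel_ratio_superlevel) auto
    show "emeasure (M \<Otimes>\<^sub>M lborel) (S (\<lambda>z. f (fst z)) (l + C)) \<le> emeasure (M \<Otimes>\<^sub>M lborel) (S g l)" for l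
      unfolding S_def
      by (rule emeasure_ratio_superlevel_mono_AE[OF S_sets[OF assms(2), unfolded S_def] _ close]) simp
    show "emeasure (M \<Otimes>\<^sub>M lborel) (S g l) \<le> emeasure (M \<Otimes>\<^sub>M lborel) (S (\<lambda>z. f (fst z)) (l - C))" for l
      using emeasure_ratio_superlevel_mono_AE[OF S_sets[OF f_meas, unfolded S_def] _ close_sym, of "l - C"]
      by (simp add: S_def)
  qed (use assms in simp_all)
  then show ?thesis
    by (simp add: S_def)
qed

theorem mainTheorem5:
  fixes M :: "'a measure" and p :: real
    and T :: "real \<Rightarrow> ('a \<Rightarrow> real) \<Rightarrow> 'a \<Rightarrow> real"
    and f :: "'a \<Rightarrow> real" and C :: real
  assumes "sigma_finite_measure M"
    and "1 \<le> p"
    and "f \<in> borel_measurable M"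
    and "integrable M (\<lambda>x. \<bar>f x\<bar> powr p)"
    and "(\<lambda>(x, t). T t f x) \<in> borel_measurable (M \<Otimes>\<^sub>M lborel)"
    and "C > 0"
    and "\<forall>t>0. AE x in M. \<bar>T t f x - f x\<bar> \<le> C * t powr (1 / p)"
  shows "((\<lambda>l. ennreal (l powr p) *
            emeasure (M \<Otimes>\<^sub>M lborel)
              {(x, t). x \<in> space M \<and> t > 0 \<and> \<bar>T t f x\<bar> / t powr (1 / p) > l})
          \<longlongrightarrow> (\<integral>\<^sup>+ x. ennreal (\<bar>f x\<bar> powr p) \<partial>M)) at_top"
proof -
  interpret pair_sigma_finite M lborel
    using assms(1) by (simp add: lborel.sigma_finite_measure_axioms pair_sigma_finite.intro)
  define g where "g z = T (snd z) f (fst z)" for z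
  have [measurable]: "g \<in> borel_measurable (M \<Otimes>\<^sub>M lborel)"
    using assms(5) unfolding g_def by (simp add: case_prod_beta')
  note [measurable] = assms(3)
  have "{z \<in> space (M \<Otimes>\<^sub>M lborel). snd z > 0 \<longrightarrow> \<bar>g z - f (fst z)\<bar> \<le> C * snd z powr (1 / p)}
      \<in> sets (M \<Otimes>\<^sub>M lborel)"
    by measurable
  then have close: "AE z in M \<Otimes>\<^sub>M lborel. snd z > 0 \<longrightarrow> \<bar>g z - f (fst z)\<bar> \<le> C * snd z powr (1 / p)"
    unfolding g_def
    by (rule AE_pair_measure_of_AE_fibres[where P="\<lambda>x t. t > 0 \<longrightarrow> \<bar>T t f x - f x\<bar> \<le> C * t powr (1 / p)"])
      (use assms(7) in auto)
  have "(\<integral>\<^sup>+ x. ennreal (\<bar>f x\<bar> powr p) \<partial>M) < top"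
    using assms(4) by (simp add: nn_integral_eq_integral less_top[symmetric])
  with close have "((\<lambda>l. ennreal (l powr p) * emeasure (M \<Otimes>\<^sub>M lborel)
      {z \<in> space (M \<Otimes>\<^sub>M lborel). snd z > 0 \<and> \<bar>g z\<bar> / snd z powr (1 / p) > l})
      \<longlongrightarrow> (\<integral>\<^sup>+ x. ennreal (\<bar>f x\<bar> powr p) \<partial>M)) at_top"
    using assms(2,6) by (intro tendsto_powr_mult_emeasure_ratio_superlevel) simp_all
  moreover have "{(x, t). x \<in> space M \<and> t > 0 \<and> \<bar>T t f x\<bar> / t powr (1 / p) > l}
      = {z \<in> space (M \<Otimes>\<^sub>M lborel). snd z > 0 \<and> \<bar>g z\<bar> / snd z powr (1 / p) > l}" for l
    by (auto simp: g_def space_pair_measure)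
  ultimately show ?thesis
    by simp
qed

end
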